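(* Let $B=[\mathbf a_1\ \cdots\ \mathbf a_n]$ be an $m\times n$ integer matrix with columns $\mathbf a_i$ such that $\mathbf a_1=\mathbf a_2$, and let $H=\ker(B)\cap\mathbb N_0^n$. Let $B'=[\mathbf a_1\ \mathbf a_3\ \cdots\ \mathbf a_n]$ and $H'=\ker(B')\cap\mathbb N_0^{n-1}$. Then there is a transfer homomorphism $\theta\colon H\to H'$.
   Context: $H$ and $H'$ are monoids under addition. A transfer homomorphism between reduced atomic monoids $H\to T$ is a surjective monoid homomorphism $\theta$ with $\theta^{-1}(0)=\{0\}$ such that whenever $\theta(a)=s+t$ with $s,t\in T$, there exist $b,c\in H$ with $a=b+c$, $\theta(b)=s$, $\theta(c)=t$. *)

theory Defs
  imports Main "HOL-Library.Function_Algebras"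
begin

text \<open>An m x n integer matrix is represented as B :: nat => nat => int (entry B i j, i < m, j < n).
  Vectors in N_0^n are functions x :: nat => nat vanishing outside {0..<n}, so that addition
  is pointwise and 0 is the zero vector.\<close>

definition kermon :: "nat \<Rightarrow> nat \<Rightarrow> (nat \<Rightarrow> nat \<Rightarrow> int) \<Rightarrow> (nat \<Rightarrow> nat) set" where
  "kermon m n B = {x. (\<forall>j\<ge>n. x j = 0) \<and> (\<forall>i<m. (\<Sum>j<n. B i j * int (x j)) = 0)}"

definition del_col1 :: "(nat \<Rightarrow> nat \<Rightarrow> int) \<Rightarrow> (nat \<Rightarrow> nat \<Rightarrow> int)" where
  "del_col1 B = (\<lambda>i j. if j = 0 then B i 0 else B i (Suc j))"

definition transfer_hom :: "('a::monoid_add) set \<Rightarrow> ('b::monoid_add) set \<Rightarrow> ('a \<Rightarrow> 'b) \<Rightarrow> bool" where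
  "transfer_hom H T \<theta> \<longleftrightarrow>
     (\<forall>a\<in>H. \<forall>b\<in>H. \<theta> (a + b) = \<theta> a + \<theta> b) \<and> \<theta> 0 = 0 \<and>
     \<theta> ` H = T \<and>
     {a\<in>H. \<theta> a = 0} = {0} \<and>
     (\<forall>a\<in>H. \<forall>s\<in>T. \<forall>t\<in>T. \<theta> a = s + t \<longrightarrow>
        (\<exists>b\<in>H. \<exists>c\<in>H. a = b + c \<and> \<theta> b = s \<and> \<theta> c = t))"

end

theory Submission
  imports Defs
begin

text \<open>Since the first two columns of B coincide, x and the vector obtained by adding its first
  two coordinates have the same image under B and B' respectively; so merging these two
  coordinates maps H onto H', and H is exactly the preimage of H'. Merging is additive and kills
  only 0, and a decomposition of a merged vector lifts by splitting the first coordinate of the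
  first summand greedily between the two merged coordinates.\<close>

definition merge01 :: "(nat \<Rightarrow> nat) \<Rightarrow> (nat \<Rightarrow> nat)" where
  "merge01 x = (\<lambda>j. if j = 0 then x 0 + x 1 else x (Suc j))"

lemma merge01_add: "merge01 (x + y) = merge01 x + merge01 y"
  by (simp add: merge01_def fun_eq_iff)

lemma merge01_zero: "merge01 0 = 0"
  by (simp add: merge01_def fun_eq_iff)

lemma merge01_eq_0_iff: "merge01 x = 0 \<longleftrightarrow> x = 0"
proof
  assume merged: "merge01 x = 0"
  have "x 0 + x 1 = 0"
    using fun_cong[OF merged, of 0] by (simp add: merge01_def)
  moreover have "x (Suc (Suc j)) = 0" for j
    using fun_cong[OF merged, of "Suc j"] by (simp add: merge01_def)
  ultimately show "x = 0"
    by (auto simp: fun_eq_iff) (metis One_nat_def not0_implies_Suc)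
qed (simp add: merge01_zero)

lemma surj_merge01: "surj merge01"
proof (rule surjI)
  fix y :: "nat \<Rightarrow> nat"
  show "merge01 (\<lambda>j. if j = 0 then y 0 else if j = 1 then 0 else y (j - 1)) = y"
    by (simp add: merge01_def fun_eq_iff)
qed

lemma merge01_diff:
  assumes "b \<le> a"
  shows "merge01 (a - b) = merge01 a - merge01 b"
  using assms by (auto simp: merge01_def fun_eq_iff le_fun_def)

lemma merge01_split:
  assumes "merge01 a = s + t"
  shows "\<exists>b c. a = b + c \<and> merge01 b = s \<and> merge01 c = t"
proof -
  have a01: "a 0 + a 1 = s 0 + t 0" and a_Suc: "\<And>j. j \<noteq> 0 \<Longrightarrow> a (Suc j) = s j + t j"
    using assms by (auto simp: merge01_def fun_eq_iff split: if_splits dest: fun_cong)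
  define b where
    "b = (\<lambda>j. if j = 0 then min (a 0) (s 0) else if j = 1 then s 0 - min (a 0) (s 0) else s (j - 1))"
  have "b \<le> a"
  proof (rule le_funI)
    fix j :: nat
    consider "j = 0" | "j = 1" | "j \<ge> 2" by linarith
    then show "b j \<le> a j"
      using a01 a_Suc[of "j - 1"] by cases (auto simp: b_def)
  qed
  moreover have "merge01 b = s"
    by (simp add: b_def merge01_def fun_eq_iff)
  ultimately have "a = b + (a - b)" and "merge01 b = s" and "merge01 (a - b) = t"
    using assms by (auto simp: merge01_diff fun_eq_iff le_fun_def)
  then show ?thesis by blast
qed

lemma sum_merge01:
  fixes B :: "nat \<Rightarrow> nat \<Rightarrow> int"
  assumes "B i 0 = B i 1"
  shows "(\<Sum>j<Suc (Suc k). B i j * int (x j)) = (\<Sum>j<Suc k. del_col1 B i j * int (merge01 x j))"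
  using assms
  by (simp add: sum.lessThan_Suc_shift del_col1_def merge01_def algebra_simps del: sum.lessThan_Suc)

lemma mem_kermon_iff_merge01:
  fixes B :: "nat \<Rightarrow> nat \<Rightarrow> int"
  assumes "\<forall>i<m. B i 0 = B i 1"
  shows "x \<in> kermon m (Suc (Suc k)) B \<longleftrightarrow> merge01 x \<in> kermon m (Suc k) (del_col1 B)"
proof -
  have "(\<forall>j\<ge>Suc (Suc k). x j = 0) \<longleftrightarrow> (\<forall>j\<ge>Suc k. merge01 x j = 0)"
    by (auto simp: merge01_def) (metis Suc_le_D Suc_le_mono)
  then show ?thesis
    using assms by (simp add: kermon_def sum_merge01 del: sum.lessThan_Suc)
qed

lemma transfer_hom_vimage:
  fixes \<theta> :: "'a::monoid_add \<Rightarrow> 'b::monoid_add"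
  assumes add: "\<And>x y. \<theta> (x + y) = \<theta> x + \<theta> y"
    and zero: "\<And>x. \<theta> x = 0 \<longleftrightarrow> x = 0"
    and "surj \<theta>"
    and split: "\<And>a s t. \<theta> a = s + t \<Longrightarrow> \<exists>b c. a = b + c \<and> \<theta> b = s \<and> \<theta> c = t"
    and "0 \<in> T"
  shows "transfer_hom (\<theta> -` T) T \<theta>"
  unfolding transfer_hom_def
proof (intro conjI ballI impI)
  have "\<theta> 0 = 0"
    using zero by blast
  show "\<theta> ` (\<theta> -` T) = T"
    using \<open>surj \<theta>\<close> by (simp add: surj_image_vimage_eq)
  show "{a \<in> \<theta> -` T. \<theta> a = 0} = {0}"
    using \<open>\<theta> 0 = 0\<close> \<open>0 \<in> T\<close> by (auto dest: zero[THEN iffD1])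
  fix a s t
  assume "s \<in> T" "t \<in> T" "\<theta> a = s + t"
  then show "\<exists>b\<in>\<theta> -` T. \<exists>c\<in>\<theta> -` T. a = b + c \<and> \<theta> b = s \<and> \<theta> c = t"
    using split by fastforce
qed (use add zero in auto)

theorem lemma3p15:
  fixes m n :: nat and B :: "nat \<Rightarrow> nat \<Rightarrow> int"
  assumes "n \<ge> 2"
    and "\<forall>i<m. B i 0 = B i 1"
  shows "\<exists>\<theta> :: (nat \<Rightarrow> nat) \<Rightarrow> (nat \<Rightarrow> nat).
           transfer_hom (kermon m n B) (kermon m (n - 1) (del_col1 B)) \<theta>"
proof -
  obtain k where n: "n = Suc (Suc k)"
    using assms(1) by (metis add_2_eq_Suc le_Suc_ex)
  let ?T = "kermon m (n - 1) (del_col1 B)"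
  have "kermon m n B = merge01 -` ?T"
    using mem_kermon_iff_merge01[OF assms(2)] n by auto
  moreover have "0 \<in> ?T"
    by (simp add: kermon_def)
  ultimately have "transfer_hom (kermon m n B) ?T merge01"
    using transfer_hom_vimage[OF merge01_add merge01_eq_0_iff surj_merge01 merge01_split]
    by simp
  then show ?thesis by blast
qed

end
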